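(* In the setting described in the context, assume $c>4.1\cdot 10^{-5}a_2b^3$ and $b>10^5$. If $z=w_n$ with $n\geq 4$, then $\log z>\frac{n}{2}\log(bc)$.
   Context: A $D(4)$-quadruple is a set of four distinct positive integers such that the product of any two distinct elements increased by $4$ is a perfect square. Setting: $a_1<a_2<b<c<d$ are positive integers such that $\{a_1,b,c,d\}$ and $\{a_2,b,c,d\}$ are $D(4)$-quadruples. Let $r_2,s_2,t,z$ be the positive integers with $a_2b+4=r_2^2$, $a_2c+4=s_2^2$, $bc+4=t^2$, $cd+4=z^2$. For integers $z_{(0)},x_{(0)},z_{(1)},y_{(1)}$ define the sequences $v_0=z_{(0)}$, $v_1=\frac12(s_2z_{(0)}+cx_{(0)})$, $v_{m+2}=s_2v_{m+1}-v_m$, and $w_0=z_{(1)}$, $w_1=\frac12(tz_{(1)}+cy_{(1)})$, $w_{n+2}=tw_{n+1}-w_n$. The value $z$ admits a representation $z=v_m=w_n$ with nonnegative integers $m,n$ where either (i) $m\equiv n\equiv 0\pmod 2$, $x_{(0)}=y_{(1)}=2$, $|z_{(0)}|=|z_{(1)}|=2$, $z_{(0)}z_{(1)}>0$; or (ii) $m\equiv n\equiv 1\pmod 2$, $x_{(0)}=y_{(1)}=r_2$, $|z_{(0)}|=t$, $|z_{(1)}|=s_2$, $z_{(0)}z_{(1)}>0$. Statements "$z=w_n$" or "$z=v_m=w_n$" refer to such a representation. *)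

theory Defs
  imports Complex_Main
begin

definition is_square :: "nat \<Rightarrow> bool" where
  "is_square n \<longleftrightarrow> (\<exists>k. n = k^2)"

definition D4_quadruple :: "nat \<Rightarrow> nat \<Rightarrow> nat \<Rightarrow> nat \<Rightarrow> bool" where
  "D4_quadruple a b c d \<longleftrightarrow> distinct [a, b, c, d] \<and> (\<forall>x\<in>{a,b,c,d}. 0 < x) \<and>
     (\<forall>x\<in>{a,b,c,d}. \<forall>y\<in>{a,b,c,d}. x \<noteq> y \<longrightarrow> is_square (x * y + 4))"

text \<open>Second-order linear recurrence u_0, u_1, u_{k+2} = s u_{k+1} - u_k (over the reals,
so that the initial value (s z + c x)/2 is taken literally).\<close>
fun lin_rec :: "real \<Rightarrow> real \<Rightarrow> real \<Rightarrow> nat \<Rightarrow> real" where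
  "lin_rec u0 u1 s 0 = u0"
| "lin_rec u0 u1 s (Suc 0) = u1"
| "lin_rec u0 u1 s (Suc (Suc k)) = s * lin_rec u0 u1 s (Suc k) - lin_rec u0 u1 s k"

end

theory Submission
  imports Defs
begin

text \<open>With \<open>S = \<surd>(bc)\<close> we have \<open>t \<ge> S + 1/S\<close>, so once the recurrence
\<open>w\<^sub>k\<^sub>+\<^sub>2 = t w\<^sub>k\<^sub>+\<^sub>1 - w\<^sub>k\<close> starts with \<open>w\<^sub>1 > S\<close> and
\<open>w\<^sub>0 \<le> (t - S) w\<^sub>1\<close>, each term is at least \<open>S\<close> times the previous one and
\<open>w\<^sub>n > S\<^sup>n = (bc)\<^sup>n\<^sup>/\<^sup>2\<close>. For three of the four admissible starting pairs
these two conditions are elementary. The delicate one is \<open>w\<^sub>1 = (c r\<^sub>2 - t s\<^sub>2)/2\<close>: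
here \<open>(c r\<^sub>2)\<^sup>2 - (t s\<^sub>2)\<^sup>2 = 4(c\<^sup>2 - a\<^sub>2c - bc - 4)\<close>, and the hypothesis
\<open>c > 4.1\<cdot>10\<^sup>-\<^sup>5 a\<^sub>2b\<^sup>3\<close> makes this difference large compared with \<open>\<surd>(bc)\<cdot>c r\<^sub>2\<close>.\<close>

lemma lin_rec_geometric_growth:
  fixes S t w0 w1 :: real
  assumes S: "0 < S" and t: "S\<^sup>2 + 1 \<le> t * S"
    and w1: "0 \<le> w1" and w0: "w0 \<le> (t - S) * w1"
  shows "S ^ k * w1 \<le> lin_rec w0 w1 t (Suc k)
    \<and> S * lin_rec w0 w1 t (Suc k) \<le> lin_rec w0 w1 t (Suc (Suc k))"
proof (induction k)
  case 0
  then show ?case using w0 by (simp add: algebra_simps)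
next
  case (Suc k)
  define u where "u = lin_rec w0 w1 t (Suc k)"
  define v where "v = lin_rec w0 w1 t (Suc (Suc k))"
  have IH: "S ^ k * w1 \<le> u" "S * u \<le> v"
    using Suc.IH unfolding u_def v_def by auto
  have "0 \<le> u" using IH(1) S w1 by (meson order.trans zero_le_mult_iff zero_le_power less_imp_le)
  then have "0 \<le> v" using IH(2) S by (meson order.trans mult_nonneg_nonneg less_imp_le)
  have "v * S\<^sup>2 + v \<le> v * (t * S)"
    using mult_left_mono[OF t \<open>0 \<le> v\<close>] by (simp add: distrib_left)
  moreover have "S * (S * v) = v * S\<^sup>2" "S * (t * v - u) = v * (t * S) - S * u"
    by (simp_all add: power2_eq_square algebra_simps)
  ultimately have "S * (S * v) \<le> S * (t * v - u)" using IH(2) by linarith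
  then have "S * v \<le> t * v - u" using S by simp
  moreover have "S ^ Suc k * w1 \<le> v"
  proof -
    have "S ^ Suc k * w1 = S * (S ^ k * w1)" by simp
    also have "\<dots> \<le> S * u" using IH(1) S by (intro mult_left_mono) auto
    finally show ?thesis using IH(2) by linarith
  qed
  moreover have "lin_rec w0 w1 t (Suc (Suc (Suc k))) = t * v - u"
    by (simp add: u_def v_def)
  ultimately show ?case by (simp add: v_def)
qed

lemma lin_rec_gt_power:
  fixes S t w0 w1 :: real
  assumes S: "0 < S" and t: "S\<^sup>2 + 1 \<le> t * S"
    and w1: "S < w1" and w0: "w0 \<le> (t - S) * w1" and n: "0 < n"
  shows "S ^ n < lin_rec w0 w1 t n"
proof -
  obtain k where k: "n = Suc k" using n by (cases n) auto
  have "S ^ n = S ^ k * S" by (simp add: k mult.commute)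
  also have "\<dots> < S ^ k * w1" using S w1 by simp
  also have "\<dots> \<le> lin_rec w0 w1 t n"
    using lin_rec_geometric_growth[OF S t _ w0] S w1 k by auto
  finally show ?thesis .
qed

lemma shifted_square_root_gap:
  fixes S T :: real
  assumes S: "1 \<le> S" and T: "0 < T" "T\<^sup>2 = S\<^sup>2 + 4"
  shows "S < T" "(T - S) * (T + S) = 4" "S\<^sup>2 + 1 \<le> T * S"
proof -
  show "S < T" using T S by (smt (verit) power2_less_imp_less)
  show "(T - S) * (T + S) = 4" using T by (simp add: algebra_simps power2_eq_square)
  have "1 \<le> S\<^sup>2" using S by (simp add: one_le_power)
  then have "(S\<^sup>2 + 1)\<^sup>2 \<le> (S\<^sup>2 + 4) * S\<^sup>2"
    by (simp add: power2_eq_square algebra_simps)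
  also have "\<dots> = (T * S)\<^sup>2" using T by (simp add: power_mult_distrib)
  finally have "(S\<^sup>2 + 1)\<^sup>2 \<le> (T * S)\<^sup>2" .
  then show "S\<^sup>2 + 1 \<le> T * S" by (rule power2_le_imp_le) (use T S in simp)
qed

lemma quadratic_bound_of_cubic_bound:
  fixes A B C :: real
  assumes A: "1 \<le> A" and B: "10^5 < B" and C: "41 / 1000000 * A * B ^ 3 < C"
  shows "4 * (A * B\<^sup>2 + 4 * B) < C"
proof -
  have "100000 \<le> A * B" using A B mult_mono[of 1 A 100000 B] by simp
  then have "100000 * B \<le> A * B * B" using B by (intro mult_right_mono) auto
  then have "4 * (A * B\<^sup>2 + 4 * B) \<le> 41 / 10 * A * B\<^sup>2"
    using B by (simp add: power2_eq_square)
  also have "\<dots> = (41 / 1000000 * A * B\<^sup>2) * 100000" by simp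
  also have "\<dots> \<le> (41 / 1000000 * A * B\<^sup>2) * B"
    using A B by (intro mult_left_mono) auto
  also have "\<dots> = 41 / 1000000 * A * B ^ 3" by (simp add: power2_eq_square power3_eq_cube)
  finally show ?thesis using C by linarith
qed

lemma initial_bounds_pos:
  fixes C S T y z :: real
  assumes z: "0 < z" and y: "2 \<le> y" and S: "0 \<le> S" "S \<le> C"
    and T: "S < T" "(T - S) * (T + S) = 4"
  shows "S < (T * z + C * y) / 2" "z \<le> (T - S) * ((T * z + C * y) / 2)"
proof -
  have "2 * C \<le> C * y" using y S by (simp add: mult.commute mult_left_mono)
  then have x: "T * z / 2 + C \<le> (T * z + C * y) / 2" by simp
  have "0 < T * z" using z T S by simp
  then show "S < (T * z + C * y) / 2" using x S by linarith
  have "(T - S) * (T + S) \<le> (T - S) * (2 * T)"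
    by (rule mult_left_mono) (use T in linarith)+
  then have "2 \<le> (T - S) * T" using T by linarith
  then have "2 * z \<le> (T - S) * T * z" using z by (intro mult_right_mono) auto
  then have "z \<le> (T - S) * (T * z / 2)" by simp
  also have "\<dots> \<le> (T - S) * ((T * z + C * y) / 2)"
    by (rule mult_left_mono) (use x S T in linarith)+
  finally show "z \<le> (T - S) * ((T * z + C * y) / 2)" .
qed

lemma initial_bound_neg_two:
  fixes B C S T :: real
  assumes B: "0 \<le> B" and C: "4 * B + 16 < C"
    and T: "T\<^sup>2 = B * C + 4" "0 < T" "S < T"
  shows "S < (T * (-2) + C * 2) / 2"
proof -
  have "C * (4 * B + 16) < C * C" using B C by (intro mult_strict_left_mono) auto
  then have "(2 * T)\<^sup>2 < C\<^sup>2" using T B C by (simp add: power2_eq_square algebra_simps)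
  then have "2 * T < C" by (rule power2_less_imp_less) (use B C in simp)
  then show ?thesis using T by simp
qed

lemma initial_bound_neg_s:
  fixes A B C Q R S T :: real
  assumes A: "1 \<le> A" and B: "1 \<le> B" and C: "4 * (A * B\<^sup>2 + 4 * B) < C"
    and T: "T\<^sup>2 = B * C + 4" "0 < T" and R: "R\<^sup>2 = A * B + 4" "0 < R"
    and Q: "Q\<^sup>2 = A * C + 4" "0 < Q" and S: "S\<^sup>2 = B * C" "0 \<le> S"
  shows "S < (T * (-Q) + C * R) / 2"
proof -
  define E where "E = C\<^sup>2 - B * C - A * C - 4"
  have C0: "0 < C" using A B C by (smt (verit) mult_nonneg_nonneg zero_le_power2)
  have "B \<le> B\<^sup>2" using B mult_right_mono[of 1 B B] by (simp add: power2_eq_square)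
  then have "1 \<le> B\<^sup>2" "B \<le> B\<^sup>2" using B by simp_all
  moreover have "B\<^sup>2 \<le> A * B\<^sup>2" "A \<le> A * B\<^sup>2"
    using A mult_right_mono[of 1 A "B\<^sup>2"] mult_left_mono[of 1 "B\<^sup>2" A] calculation by auto
  ultimately have AB: "B \<le> A * B\<^sup>2" "A \<le> A * B\<^sup>2" "1 \<le> A * B\<^sup>2" by auto
  have "(C * R)\<^sup>2 = C\<^sup>2 * (A * B + 4)" "(T * Q)\<^sup>2 = (B * C + 4) * (A * C + 4)"
    using T R Q by (simp_all add: power_mult_distrib)
  then have CR: "(C * R)\<^sup>2 - (T * Q)\<^sup>2 = 4 * E"
    by (simp add: E_def power2_eq_square algebra_simps)
  have "4 * (A * B\<^sup>2) + 16 * B < C" using C by simp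
  then have "2 * B + 2 * A + 8 \<le> C" using B AB by linarith
  then have "C * (C / 2) \<le> C * (C - B - A - 4)" using C0 by (intro mult_left_mono) auto
  moreover have "C * (C - B - A - 4) \<le> E" using \<open>2 * B + 2 * A + 8 \<le> C\<close> A B
    by (simp add: E_def power2_eq_square algebra_simps)
  ultimately have E_ge: "C\<^sup>2 / 2 \<le> E" by (simp add: power2_eq_square)
  moreover have "0 < C\<^sup>2 / 2" using C0 by simp
  ultimately have "0 < E" by linarith
  have "(S * (C * R))\<^sup>2 = C ^ 3 * (A * B\<^sup>2 + 4 * B)"
    using S R by (simp add: power_mult_distrib power2_eq_square power3_eq_cube algebra_simps)
  also have "\<dots> < C ^ 3 * (C / 4)" using C C0 by (intro mult_strict_left_mono) auto
  also have "\<dots> = (C\<^sup>2 / 2)\<^sup>2" by (simp add: power2_eq_square power3_eq_cube)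
  also have "\<dots> \<le> E\<^sup>2" using E_ge C0 by (intro power_mono) auto
  finally have SE: "S * (C * R) < E" by (rule power2_less_imp_less) (use \<open>0 < E\<close> in simp)
  have "(T * Q)\<^sup>2 < (C * R)\<^sup>2" using CR \<open>0 < E\<close> by linarith
  then have "T * Q < C * R" by (rule power2_less_imp_less) (use C0 R in simp)
  have "4 * (S * (C * R)) < (C * R - T * Q) * (C * R + T * Q)"
    using CR SE by (simp add: power2_eq_square algebra_simps)
  also have "\<dots> \<le> (C * R - T * Q) * (2 * (C * R))"
    by (rule mult_left_mono) (use \<open>T * Q < C * R\<close> in linarith)+
  finally have "(C * R) * (2 * S) < (C * R) * (C * R - T * Q)"
    by (simp add: algebra_simps)
  then have "2 * S < C * R - T * Q" using C0 R by (simp add: mult_less_cancel_left_pos)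
  then show ?thesis by simp
qed

lemma initial_bounds:
  fixes A B C Q R S T y z :: real
  assumes A: "1 \<le> A" and B: "1 \<le> B" and C: "4 * (A * B\<^sup>2 + 4 * B) < C"
    and T: "T\<^sup>2 = B * C + 4" "0 < T" and R: "R\<^sup>2 = A * B + 4" "0 < R"
    and Q: "Q\<^sup>2 = A * C + 4" "0 < Q" and S: "S\<^sup>2 = B * C" "0 \<le> S"
    and zy: "(z = 2 \<and> y = 2) \<or> (z = -2 \<and> y = 2) \<or> (z = Q \<and> y = R) \<or> (z = -Q \<and> y = R)"
  shows "S < (T * z + C * y) / 2 \<and> z \<le> (T - S) * ((T * z + C * y) / 2)"
proof -
  have "1 \<le> B\<^sup>2" "B\<^sup>2 \<le> A * B\<^sup>2" using A B mult_right_mono[of 1 A "B\<^sup>2"] by (simp_all add: one_le_power)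
  moreover have "4 * (A * B\<^sup>2) + 16 * B < C" using C by (simp add: distrib_left)
  ultimately have C': "4 * B + 16 < C" using B by linarith
  then have "B * C \<le> C * C" using B by (intro mult_right_mono) auto
  then have "S\<^sup>2 \<le> C\<^sup>2" using S by (simp add: power2_eq_square)
  then have "S \<le> C" by (rule power2_le_imp_le) (use B C' in simp)
  have "1 * 1 \<le> B * C" using B C' by (intro mult_mono) auto
  then have "1 \<le> S" using S by (smt (verit) power2_le_imp_le one_power2)
  note gap = shifted_square_root_gap[OF this T(2), unfolded S(1), OF T(1)]
  have neg: "z \<le> (T - S) * ((T * z + C * y) / 2)" if "z < 0" "S < (T * z + C * y) / 2"
  proof -
    have "0 < (T - S) * ((T * z + C * y) / 2)" using that gap(1) \<open>1 \<le> S\<close> by simp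
    then show ?thesis using that by linarith
  qed
  have "2 \<le> R"
  proof (rule power2_le_imp_le)
    show "2\<^sup>2 \<le> R\<^sup>2" using R A B by simp
  qed (use R in simp)
  from zy consider "0 < z \<and> 2 \<le> y" | "z = -2 \<and> y = 2" | "z = -Q \<and> y = R"
    using \<open>2 \<le> R\<close> Q(2) by force
  then show ?thesis
  proof cases
    case 1
    then show ?thesis using initial_bounds_pos[OF _ _ S(2) \<open>S \<le> C\<close> gap(1,2)] by simp
  next
    case 2
    then show ?thesis using initial_bound_neg_two[OF _ C' T gap(1)] neg B by simp
  next
    case 3
    then show ?thesis using initial_bound_neg_s[OF A B C T R Q S] neg Q(2) by simp
  qed
qed

theorem mainTheorem8:
  fixes a1 a2 b c d r2 s2 t z :: nat
    and z0 x0 z1 y1 :: int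
    and m n :: nat
  assumes pos: "0 < a1" and ord: "a1 < a2" "a2 < b" "b < c" "c < d"
    and q1: "D4_quadruple a1 b c d" and q2: "D4_quadruple a2 b c d"
    and r2: "0 < r2" "a2 * b + 4 = r2^2"
    and s2: "0 < s2" "a2 * c + 4 = s2^2"
    and t: "0 < t" "b * c + 4 = t^2"
    and z: "0 < z" "c * d + 4 = z^2"
    and v: "real z = lin_rec (of_int z0) ((real s2 * of_int z0 + real c * of_int x0) / 2) (real s2) m"
    and w: "real z = lin_rec (of_int z1) ((real t * of_int z1 + real c * of_int y1) / 2) (real t) n"
    and cases: "(even m \<and> even n \<and> x0 = 2 \<and> y1 = 2 \<and> \<bar>z0\<bar> = 2 \<and> \<bar>z1\<bar> = 2 \<and> z0 * z1 > 0)
              \<or> (odd m \<and> odd n \<and> x0 = int r2 \<and> y1 = int r2 \<and> \<bar>z0\<bar> = int t \<and> \<bar>z1\<bar> = int s2 \<and> z0 * z1 > 0)"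
    and hc: "real c > 41 / 1000000 * real a2 * real b ^ 3"
    and hb: "b > 10^5"
    and hn: "n \<ge> 4"
  shows "ln (real z) > real n / 2 * ln (real b * real c)"
proof -
  define S where "S = sqrt (real b * real c)"
  define w1 where "w1 = (real t * of_int z1 + real c * of_int y1) / 2"
  have a2: "1 \<le> real a2" and b: "1 \<le> real b" using pos ord hb by simp_all
  have "(10::real) ^ 5 < real b" using hb by (metis of_nat_less_iff of_nat_numeral of_nat_power)
  note c_big = quadratic_bound_of_cubic_bound[OF a2 this hc]
  have "1 * 1 \<le> real b * real c" using b ord by (intro mult_mono) auto
  then have S_sq: "S\<^sup>2 = real b * real c" "0 \<le> S" and "1 \<le> S" unfolding S_def by simp_all
  have t_sq: "(real t)\<^sup>2 = real b * real c + 4" using arg_cong[OF t(2), of real] by simp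
  have r2_sq: "(real r2)\<^sup>2 = real a2 * real b + 4" using arg_cong[OF r2(2), of real] by simp
  have s2_sq: "(real s2)\<^sup>2 = real a2 * real c + 4" using arg_cong[OF s2(2), of real] by simp
  have "(real_of_int z1 = 2 \<and> real_of_int y1 = 2) \<or> (real_of_int z1 = -2 \<and> real_of_int y1 = 2)
      \<or> (of_int z1 = real s2 \<and> of_int y1 = real r2) \<or> (of_int z1 = - real s2 \<and> of_int y1 = real r2)"
    using cases unfolding abs_eq_iff' by auto
  then have "S < w1 \<and> of_int z1 \<le> (real t - S) * w1"
    unfolding w1_def using t(1) r2(1) s2(1)
    by (intro initial_bounds[OF a2 b c_big t_sq _ r2_sq _ s2_sq _ S_sq]) simp_all
  moreover have "S\<^sup>2 + 1 \<le> real t * S"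
    using shifted_square_root_gap(3)[OF \<open>1 \<le> S\<close> _ t_sq[folded S_sq(1)]] t(1) by simp
  ultimately have "S ^ n < lin_rec (of_int z1) w1 (real t) n"
    using \<open>1 \<le> S\<close> hn by (intro lin_rec_gt_power) auto
  then have "S ^ n < real z" using w unfolding w1_def by simp
  moreover have "0 < S ^ n" using \<open>1 \<le> S\<close> by simp
  ultimately have "ln (S ^ n) < ln (real z)" by simp
  also have "ln (S ^ n) = real n / 2 * ln (real b * real c)"
    using \<open>1 * 1 \<le> real b * real c\<close> by (simp add: S_def ln_realpow ln_sqrt)
  finally show ?thesis .
qed

end
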